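(* Let $A$ be a finite set and let $v:2^A\to\mathbb{R}_{\ge 0}$ be a monotone subadditive function with $v(\emptyset)=0$. Let $S\subseteq A$ and let $k$ be a positive integer such that $v(S)\ge k\cdot v(\{i\})$ for every $i\in S$. Suppose $S$ is divided uniformly at random into two groups $T_1$ and $T_2=S\setminus T_1$ (each element of $S$ is placed into $T_1$ or $T_2$ independently with probability $\frac12$ each). Then with probability at least $\frac{1}{2}$ we have both $v(T_1)\ge \frac{k-1}{4k}v(S)$ and $v(T_2)\ge \frac{k-1}{4k}v(S)$.
   Context: Subadditive means $v(S)+v(T)\ge v(S\cup T)$ for all $S,T\subseteq A$; monotone means $v(S)\le v(T)$ whenever $S\subseteq T$. *)

theory Defs
  imports "HOL-Probability.Probability"
begin

definition monotone_set_fun :: "'a set \<Rightarrow> ('a set \<Rightarrow> real) \<Rightarrow> bool" where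
  "monotone_set_fun A v \<longleftrightarrow> (\<forall>S T. S \<subseteq> T \<and> T \<subseteq> A \<longrightarrow> v S \<le> v T)"

definition subadditive_set_fun :: "'a set \<Rightarrow> ('a set \<Rightarrow> real) \<Rightarrow> bool" where
  "subadditive_set_fun A v \<longleftrightarrow> (\<forall>S T. S \<subseteq> A \<and> T \<subseteq> A \<longrightarrow> v (S \<union> T) \<le> v S + v T)"

end

theory Submission
  imports Defs
begin

text \<open>Write \<open>w = (k - 1)/(4k) \<cdot> v(S)\<close>, so that \<open>4w + v(S)/k = v(S)\<close>. An inclusion-minimal
  \<open>S\<^sub>1 \<subseteq> S\<close> with \<open>v(S\<^sub>1) \<ge> 2w\<close> loses less than \<open>2w\<close> when one element is removed, and a single
  element is worth at most \<open>v(S)/k\<close>; hence \<open>v(S\<^sub>1) \<le> 2w + v(S)/k\<close> and, by subadditivity, also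
  \<open>S\<^sub>2 = S - S\<^sub>1\<close> has \<open>v(S\<^sub>2) \<ge> 2w\<close>. For a set \<open>R\<close> with \<open>v(R) \<ge> 2w\<close>, subadditivity says that \<open>X\<close>
  and \<open>R - X\<close> cannot both be worth less than \<open>w\<close>, so at most half of the subsets of \<open>R\<close> are.
  By monotonicity \<open>v(T\<^sub>1) < w\<close> forces both \<open>v(T\<^sub>1 \<inter> S\<^sub>1) < w\<close> and \<open>v(T\<^sub>1 \<inter> S\<^sub>2) < w\<close>, which are
  independent events of probability at most \<open>1/2\<close>; so \<open>v(T\<^sub>1) < w\<close> has probability at most
  \<open>1/4\<close>, the same holds for \<open>T\<^sub>2\<close>, and the union bound finishes the proof.\<close>

lemma monotone_set_funD:
  "monotone_set_fun A v \<Longrightarrow> S \<subseteq> T \<Longrightarrow> T \<subseteq> A \<Longrightarrow> v S \<le> v T"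
  unfolding monotone_set_fun_def by blast

lemma subadditive_set_funD:
  "subadditive_set_fun A v \<Longrightarrow> S \<subseteq> A \<Longrightarrow> T \<subseteq> A \<Longrightarrow> v (S \<union> T) \<le> v S + v T"
  unfolding subadditive_set_fun_def by blast

lemma subadditive_set_fun_Diff:
  assumes "subadditive_set_fun A v" "R \<subseteq> A" "X \<subseteq> R"
  shows "v R \<le> v X + v (R - X)"
proof -
  have "R = X \<union> (R - X)" using assms(3) by blast
  then show ?thesis
    using subadditive_set_funD[OF assms(1), of X "R - X"] assms(2,3) by auto
qed

lemma card_Pow_filter_Diff:
  "card {X \<in> Pow R. P (R - X)} = card {X \<in> Pow R. P X}"
proof (rule bij_betw_same_card)
  show "bij_betw (\<lambda>X. R - X) {X \<in> Pow R. P (R - X)} {X \<in> Pow R. P X}"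
    by (rule bij_betw_byWitness[where f' = "\<lambda>X. R - X"]) (auto simp: double_diff)
qed

lemma card_Pow_filter_le_half:
  assumes "finite R" "\<And>X. X \<subseteq> R \<Longrightarrow> P X \<Longrightarrow> \<not> P (R - X)"
  shows "2 * card {X \<in> Pow R. P X} \<le> 2 ^ card R"
proof -
  let ?A = "{X \<in> Pow R. P X}"
  let ?B = "{X \<in> Pow R. P (R - X)}"
  have "?A \<inter> ?B = {}" using assms(2) by blast
  then have "card ?A + card ?B = card (?A \<union> ?B)"
    using assms(1) by (simp add: card_Un_disjoint)
  also have "\<dots> \<le> card (Pow R)"
    using assms(1) by (intro card_mono) auto
  finally show ?thesis
    using assms(1) by (simp only: card_Pow_filter_Diff card_Pow mult_2)
qed

lemma card_Pow_Un_filter: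
  assumes "finite S\<^sub>1" "finite S\<^sub>2" "S\<^sub>1 \<inter> S\<^sub>2 = {}"
  shows "card {T \<in> Pow (S\<^sub>1 \<union> S\<^sub>2). P (T \<inter> S\<^sub>1) \<and> Q (T \<inter> S\<^sub>2)}
       = card {X \<in> Pow S\<^sub>1. P X} * card {Y \<in> Pow S\<^sub>2. Q Y}"
proof -
  have split: "(X \<union> Y) \<inter> S\<^sub>1 = X" "(X \<union> Y) \<inter> S\<^sub>2 = Y"
    if "X \<subseteq> S\<^sub>1" "Y \<subseteq> S\<^sub>2" for X Y
    using that assms(3) by blast+
  have "bij_betw (\<lambda>T. (T \<inter> S\<^sub>1, T \<inter> S\<^sub>2)) {T \<in> Pow (S\<^sub>1 \<union> S\<^sub>2). P (T \<inter> S\<^sub>1) \<and> Q (T \<inter> S\<^sub>2)}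
          ({X \<in> Pow S\<^sub>1. P X} \<times> {Y \<in> Pow S\<^sub>2. Q Y})"
    by (rule bij_betw_byWitness[where f' = "\<lambda>(X, Y). X \<union> Y"]) (auto simp: split)
  then show ?thesis
    by (simp add: bij_betw_same_card card_cartesian_product)
qed

lemma card_Pow_small_le_half:
  assumes "subadditive_set_fun A v" "R \<subseteq> A" "finite R" "2 * w \<le> v R"
  shows "2 * card {X \<in> Pow R. v X < w} \<le> 2 ^ card R"
proof (rule card_Pow_filter_le_half[OF assms(3)])
  fix X assume "X \<subseteq> R" "v X < w"
  then show "\<not> v (R - X) < w"
    using subadditive_set_fun_Diff[OF assms(1,2) \<open>X \<subseteq> R\<close>] assms(4) by linarith
qed

lemma card_Pow_small_le_quarter:
  assumes "monotone_set_fun A v" "subadditive_set_fun A v" "S \<subseteq> A" "finite S"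
    and "S\<^sub>1 \<subseteq> S" "2 * w \<le> v S\<^sub>1" "2 * w \<le> v (S - S\<^sub>1)"
  shows "4 * card {T \<in> Pow S. v T < w} \<le> 2 ^ card S"
proof -
  define S\<^sub>2 where "S\<^sub>2 = S - S\<^sub>1"
  have S_eq: "S = S\<^sub>1 \<union> S\<^sub>2" and disj: "S\<^sub>1 \<inter> S\<^sub>2 = {}" and "S\<^sub>2 \<subseteq> S"
    using assms(5) by (auto simp: S\<^sub>2_def)
  have fin: "finite S\<^sub>1" "finite S\<^sub>2" using assms(4,5) \<open>S\<^sub>2 \<subseteq> S\<close> by (auto intro: finite_subset)
  have "{T \<in> Pow S. v T < w} \<subseteq> {T \<in> Pow (S\<^sub>1 \<union> S\<^sub>2). v (T \<inter> S\<^sub>1) < w \<and> v (T \<inter> S\<^sub>2) < w}"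
  proof
    fix T assume "T \<in> {T \<in> Pow S. v T < w}"
    then have "T \<subseteq> S" "v T < w" by auto
    moreover have "v (T \<inter> S\<^sub>1) \<le> v T" "v (T \<inter> S\<^sub>2) \<le> v T"
      using \<open>T \<subseteq> S\<close> assms(3) by (auto intro!: monotone_set_funD[OF assms(1)])
    ultimately show "T \<in> {T \<in> Pow (S\<^sub>1 \<union> S\<^sub>2). v (T \<inter> S\<^sub>1) < w \<and> v (T \<inter> S\<^sub>2) < w}"
      using S_eq by auto
  qed
  then have "card {T \<in> Pow S. v T < w}
      \<le> card {T \<in> Pow (S\<^sub>1 \<union> S\<^sub>2). v (T \<inter> S\<^sub>1) < w \<and> v (T \<inter> S\<^sub>2) < w}"
    using fin by (intro card_mono) auto
  also have "\<dots> = card {X \<in> Pow S\<^sub>1. v X < w} * card {Y \<in> Pow S\<^sub>2. v Y < w}"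
    by (rule card_Pow_Un_filter[OF fin disj])
  finally have "card {T \<in> Pow S. v T < w} \<le> \<dots>" .
  then have "4 * card {T \<in> Pow S. v T < w}
      \<le> (2 * card {X \<in> Pow S\<^sub>1. v X < w}) * (2 * card {Y \<in> Pow S\<^sub>2. v Y < w})"
    by simp
  also have "\<dots> \<le> 2 ^ card S\<^sub>1 * 2 ^ card S\<^sub>2"
  proof (rule mult_le_mono)
    show "2 * card {X \<in> Pow S\<^sub>1. v X < w} \<le> 2 ^ card S\<^sub>1"
      using assms(3,5,6) fin by (intro card_Pow_small_le_half[OF assms(2)]) auto
    show "2 * card {Y \<in> Pow S\<^sub>2. v Y < w} \<le> 2 ^ card S\<^sub>2"
      using assms(3,7) \<open>S\<^sub>2 \<subseteq> S\<close> fin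
      by (intro card_Pow_small_le_half[OF assms(2)]) (auto simp: S\<^sub>2_def)
  qed
  also have "\<dots> = 2 ^ card S"
    using fin disj S_eq by (simp add: card_Un_disjoint power_add)
  finally show ?thesis .
qed

lemma subadditive_set_fun_balanced_split:
  assumes "subadditive_set_fun A v" "S \<subseteq> A" "finite S"
    and "\<forall>x\<in>S. v {x} \<le> d" "0 \<le> w" "0 \<le> d" "4 * w + d \<le> v S"
  obtains S\<^sub>1 where "S\<^sub>1 \<subseteq> S" "2 * w \<le> v S\<^sub>1" "2 * w \<le> v (S - S\<^sub>1)"
proof -
  define F where "F = {Y. Y \<subseteq> S \<and> 2 * w \<le> v Y}"
  have "S \<in> F" "finite F" using assms(3,5-7) by (auto simp: F_def)
  then obtain S\<^sub>1 where "S\<^sub>1 \<in> F" and minimal: "\<forall>Y\<in>F. Y \<subseteq> S\<^sub>1 \<longrightarrow> S\<^sub>1 = Y"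
    using finite_has_minimal by blast
  then have "S\<^sub>1 \<subseteq> S" "2 * w \<le> v S\<^sub>1" by (auto simp: F_def)
  moreover have "2 * w \<le> v (S - S\<^sub>1)"
  proof (cases "S\<^sub>1 = {}")
    case True
    then show ?thesis using assms(5-7) by simp
  next
    case False
    then obtain x where "x \<in> S\<^sub>1" by blast
    then have "S\<^sub>1 - {x} \<notin> F" using minimal by blast
    then have "v (S\<^sub>1 - {x}) < 2 * w" using \<open>S\<^sub>1 \<subseteq> S\<close> by (auto simp: F_def)
    moreover have "v S\<^sub>1 \<le> v {x} + v (S\<^sub>1 - {x})"
      using subadditive_set_fun_Diff[OF assms(1), of S\<^sub>1 "{x}"] \<open>x \<in> S\<^sub>1\<close> \<open>S\<^sub>1 \<subseteq> S\<close> assms(2) by auto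
    moreover have "v S \<le> v S\<^sub>1 + v (S - S\<^sub>1)"
      using subadditive_set_fun_Diff[OF assms(1,2) \<open>S\<^sub>1 \<subseteq> S\<close>] .
    ultimately show ?thesis using assms(4,7) \<open>x \<in> S\<^sub>1\<close> \<open>S\<^sub>1 \<subseteq> S\<close> by fastforce
  qed
  ultimately show thesis by (rule that)
qed

lemma prob_pmf_of_set_Pow_both_ge_half:
  assumes "finite S"
    and "4 * card {T \<in> Pow S. \<not> P T} \<le> 2 ^ card S"
    and "4 * card {T \<in> Pow S. \<not> Q T} \<le> 2 ^ card S"
  shows "measure_pmf.prob (pmf_of_set (Pow S)) {T. P T \<and> Q T} \<ge> 1 / 2"
proof -
  let ?G = "{T \<in> Pow S. P T \<and> Q T}"
  have "card (Pow S) = card (?G \<union> {T \<in> Pow S. \<not> P T} \<union> {T \<in> Pow S. \<not> Q T})"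
    by (rule arg_cong[where f = card]) blast
  also have "\<dots> \<le> card ?G + card {T \<in> Pow S. \<not> P T} + card {T \<in> Pow S. \<not> Q T}"
    by (meson card_Un_le add_le_mono1 order_trans)
  finally have "card (Pow S) \<le> \<dots>" .
  then have "2 ^ card S \<le> 2 * card ?G"
    using assms by (simp add: card_Pow)
  then have "real (2 ^ card S) \<le> 2 * real (card ?G)"
    by linarith
  then have "1 / 2 \<le> real (card ?G) / 2 ^ card S"
    by (simp add: field_simps)
  also have "\<dots> = measure_pmf.prob (pmf_of_set (Pow S)) {T. P T \<and> Q T}"
    using measure_pmf_of_set[of "Pow S" "{T. P T \<and> Q T}"] assms(1)
    by (simp add: card_Pow Int_def Pow_not_empty)
  finally show ?thesis .
qed

theorem lemma2p1:
  fixes A :: "'a set" and v :: "'a set \<Rightarrow> real" and S :: "'a set" and k :: nat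
  assumes "finite A"
    and "\<forall>T. T \<subseteq> A \<longrightarrow> v T \<ge> 0"
    and "monotone_set_fun A v"
    and "subadditive_set_fun A v"
    and "v {} = 0"
    and "S \<subseteq> A"
    and "k > 0"
    and "\<forall>i\<in>S. v S \<ge> real k * v {i}"
  shows "measure_pmf.prob (pmf_of_set (Pow S))
           {T1. v T1 \<ge> (real k - 1) / (4 * real k) * v S \<and>
                v (S - T1) \<ge> (real k - 1) / (4 * real k) * v S} \<ge> 1 / 2"
proof -
  define w where "w = (real k - 1) / (4 * real k) * v S"
  have "finite S" using assms(6,1) by (rule finite_subset)
  have "0 \<le> v S" using assms(2,6) by blast
  moreover have "1 \<le> real k" using assms(7) by simp
  ultimately have "0 \<le> w" "0 \<le> v S / real k" "4 * w + v S / real k = v S"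
    unfolding w_def
    by (auto intro!: mult_nonneg_nonneg divide_nonneg_nonneg) (simp add: field_simps)
  moreover have "\<forall>x\<in>S. v {x} \<le> v S / real k"
    using assms(7,8) by (simp add: field_simps mult.commute)
  ultimately obtain S\<^sub>1 where "S\<^sub>1 \<subseteq> S" "2 * w \<le> v S\<^sub>1" "2 * w \<le> v (S - S\<^sub>1)"
    using subadditive_set_fun_balanced_split[OF assms(4,6) \<open>finite S\<close>] by (metis order_refl)
  then have "4 * card {T \<in> Pow S. v T < w} \<le> 2 ^ card S"
    by (rule card_Pow_small_le_quarter[OF assms(3,4,6) \<open>finite S\<close>])
  moreover have "card {T \<in> Pow S. v (S - T) < w} = card {T \<in> Pow S. v T < w}"
    by (rule card_Pow_filter_Diff)
  ultimately have "measure_pmf.prob (pmf_of_set (Pow S)) {T. w \<le> v T \<and> w \<le> v (S - T)} \<ge> 1 / 2"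
    by (intro prob_pmf_of_set_Pow_both_ge_half \<open>finite S\<close>) (simp_all add: not_le)
  then show ?thesis by (simp add: w_def)
qed

end
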